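(* Let $(g,f)$ be a Riordan matrix with $f(t)=\sum_{j\ge1}f_jt^j$, let $Z(t)=\sum_{j\ge0}z_jt^j$ be the generating function of its $Z$-sequence, and let $\bar f(t)=\sum_{j\ge1}\bar f_jt^j$ be the compositional inverse of $f$ (with $\bar f_0=0$). Then a sequence $(\hat b_j)_{j\ge0}$ is a type-II $B$-sequence of $(g,f)$ if and only if $\hat b_0=z_0$, $z_1=0$, for every $\ell\ge1$ $$\hat b_\ell=f_1^{\ell}\Big(z_{2\ell}-\sum_{\mathbf i=(i_1,\dots,i_k)\in\mathcal D_{2\ell,\ell-1}}\hat b_k\,\bar f_{i_1-1}\bar f_{i_2-1}\cdots\bar f_{i_k-1}\Big),$$ and for every $\ell\ge1$ $$z_{2\ell+1}=\sum_{\mathbf i=(i_1,\dots,i_k)\in\mathcal D_{2\ell+1,\ell}}\hat b_k\,\bar f_{i_1-1}\bar f_{i_2-1}\cdots\bar f_{i_k-1}.$$ (Thus $\hat b_1=f_1z_2$, $z_3=\hat b_1\bar f_2$, $\hat b_2=f_1^2(z_4-\hat b_1\bar f_3)$, $z_5=\hat b_1\bar f_4+2\hat b_2\bar f_1\bar f_2$, etc., with $z_{2\ell}$ arbitrary.)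
   Context: Let $K$ be $\mathbb{R}$ or $\mathbb{C}$. A (proper) Riordan matrix is a pair $(g,f)$ of formal power series in $K[[t]]$ with $g(0)=1$, $f(0)=0$, $f'(0)\neq 0$, identified with the infinite lower triangular matrix $(d_{n,k})_{n,k\ge0}$, $d_{n,k}=[t^n]g(t)f(t)^k$; we set $d_{n,k}=0$ if $n<0$, $k<0$ or $k>n$. The $Z$-sequence of $(g,f)$ is the unique sequence whose generating function $Z(t)$ satisfies $g(t)=1/(1-tZ(f(t)))$. A type-II $B$-sequence is a sequence $(\hat b_j)_{j\ge0}$ such that $d_{n+1,0}=\sum_{j\ge0}\hat b_j d_{n-j,j}$ for all $n\ge0$. For positive integers $n,m$, $\mathcal D_{n,m}$ is the set of compositions of $n$ into at most $m$ parts, i.e. tuples $(i_1,\dots,i_k)$ of positive integers with $1\le k\le m$ and $i_1+\cdots+i_k=n$; $k$ is the length. By convention $\mathcal D_{2,0}=\emptyset$ (empty sums are $0$). *)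

theory Defs
  imports "HOL-Computational_Algebra.Formal_Power_Series"
begin

definition riordan :: "'a::field fps \<Rightarrow> 'a fps \<Rightarrow> bool" where
  "riordan g f \<longleftrightarrow> fps_nth g 0 = 1 \<and> fps_nth f 0 = 0 \<and> fps_nth f 1 \<noteq> 0"

definition riordan_entry :: "'a::field fps \<Rightarrow> 'a fps \<Rightarrow> nat \<Rightarrow> nat \<Rightarrow> 'a" where
  "riordan_entry g f n k = (if k \<le> n then fps_nth (g * f ^ k) n else 0)"

definition is_Z_gf :: "'a::field fps \<Rightarrow> 'a fps \<Rightarrow> 'a fps \<Rightarrow> bool" where
  "is_Z_gf g f Z \<longleftrightarrow> g = inverse (1 - fps_X * (Z oo f))"

(* type-II B-sequence: d_{n+1,0} = sum_j b_j d_{n-j,j}; terms with j > n vanish (n-j < 0) *)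
definition is_typeII_B_seq :: "'a::field fps \<Rightarrow> 'a fps \<Rightarrow> (nat \<Rightarrow> 'a) \<Rightarrow> bool" where
  "is_typeII_B_seq g f b \<longleftrightarrow>
     (\<forall>n. riordan_entry g f (Suc n) 0 = (\<Sum>j\<le>n. b j * riordan_entry g f (n - j) j))"

definition compositions_le :: "nat \<Rightarrow> nat \<Rightarrow> nat list set" where
  "compositions_le n m = {is. 1 \<le> length is \<and> length is \<le> m \<and> (\<forall>i\<in>set is. 0 < i) \<and> sum_list is = n}"

end

theory Submission
  imports Defs
begin

(* The type-II recurrence for b says exactly that g = 1 + t g B(t f(t)), where B is the
   generating function of b, while the Z-sequence gives g = 1 + t g Z(f(t)).  Cancelling t g,
   b is a type-II B-sequence iff B(t f) = Z(f), i.e. Z(t) = B(t fbar(t)).  Since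
   t fbar(t) = t^2/f_1 + ..., its k-th power starts at t^(2k) with coefficient f_1^(-k), and its
   coefficients are sums over compositions of products of the fbar_(i-1).  Hence the odd
   coefficients of B(t fbar(t)) only involve the b_k with 2k < n, while the coefficient of
   t^(2l) involves b_l linearly with factor f_1^(-l), so that z_(2l) can be solved for b_l. *)

unbundle fps_syntax

definition compositions :: "nat \<Rightarrow> nat \<Rightarrow> nat list set" where
  "compositions n k = {is. length is = k \<and> (\<forall>i\<in>set is. 0 < i) \<and> sum_list is = n}"

lemma finite_compositions: "finite (compositions n k)"
proof (rule finite_subset)
  show "compositions n k \<subseteq> {xs. set xs \<subseteq> {0..n} \<and> length xs = k}"
    by (auto simp: compositions_def member_le_sum_list)
qed (rule finite_lists_length_eq, simp)

lemma compositions_0_right: "compositions n 0 = (if n = 0 then {[]} else {})"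
  by (auto simp: compositions_def)

lemma bij_betw_Cons_compositions:
  "bij_betw (\<lambda>(i, is). i # is) (SIGMA i:{1..n}. compositions (n - i) k) (compositions n (Suc k))"
proof (rule bij_betwI')
  fix y assume y: "y \<in> compositions n (Suc k)"
  then obtain i xs where "y = i # xs" by (cases y) (auto simp: compositions_def)
  with y show "\<exists>x\<in>(SIGMA i:{1..n}. compositions (n - i) k). y = (case x of (i, is) \<Rightarrow> i # is)"
    by (intro bexI[of _ "(i, xs)"]) (auto simp: compositions_def)
qed (auto simp: compositions_def)

lemma fps_power_nth_compositions:
  fixes h :: "'a::comm_ring_1 fps"
  assumes "h $ 0 = 0"
  shows "(h ^ k) $ n = (\<Sum>is\<in>compositions n k. \<Prod>i\<leftarrow>is. h $ i)"
proof (induction k arbitrary: n)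
  case 0
  then show ?case by (simp add: compositions_0_right)
next
  case (Suc k)
  have "(h ^ Suc k) $ n = (\<Sum>i=1..n. h $ i * (h ^ k) $ (n - i))"
    using assms by (simp add: fps_mult_nth sum.atLeast_Suc_atMost)
  also have "\<dots> = (\<Sum>(i, is)\<in>(SIGMA i:{1..n}. compositions (n - i) k). \<Prod>j\<leftarrow>i # is. h $ j)"
    by (simp add: Suc sum_distrib_left sum.Sigma finite_compositions)
  also have "\<dots> = (\<Sum>is\<in>compositions n (Suc k). \<Prod>i\<leftarrow>is. h $ i)"
    using sum.reindex_bij_betw[OF bij_betw_Cons_compositions, of "\<lambda>is. \<Prod>i\<leftarrow>is. h $ i"]
    by (simp add: split_def)
  finally show ?case .
qed

lemma compositions_le_eq_UN: "compositions_le n m = (\<Union>k\<in>{1..m}. compositions n k)"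
  by (auto simp: compositions_le_def compositions_def)

lemma sum_compositions_le_eq_power_nth:
  fixes p :: "'a::comm_ring_1 fps" and b :: "nat \<Rightarrow> 'a"
  shows "(\<Sum>is\<in>compositions_le n m. b (length is) * (\<Prod>i\<leftarrow>is. p $ (i - 1)))
       = (\<Sum>k=1..m. b k * ((fps_X * p) ^ k) $ n)"
proof -
  have "(\<Sum>is\<in>compositions_le n m. b (length is) * (\<Prod>i\<leftarrow>is. p $ (i - 1)))
      = (\<Sum>k=1..m. \<Sum>is\<in>compositions n k. b k * (\<Prod>i\<leftarrow>is. (fps_X * p) $ i))"
    unfolding compositions_le_eq_UN
  proof (subst sum.UNION_disjoint)
    show "(\<Sum>k=1..m. \<Sum>is\<in>compositions n k. b (length is) * (\<Prod>i\<leftarrow>is. p $ (i - 1)))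
        = (\<Sum>k=1..m. \<Sum>is\<in>compositions n k. b k * (\<Prod>i\<leftarrow>is. (fps_X * p) $ i))"
      by (intro sum.cong refl arg_cong2[where f = "(*)"] arg_cong[where f = prod_list] map_cong)
         (auto simp: compositions_def)
  qed (simp_all add: finite_compositions, auto simp: compositions_def)
  also have "\<dots> = (\<Sum>k=1..m. b k * ((fps_X * p) ^ k) $ n)"
    by (simp add: fps_power_nth_compositions sum_distrib_left)
  finally show ?thesis .
qed

lemma fps_compose_nth_upto:
  fixes a c :: "'a::comm_ring_1 fps"
  assumes "c $ 0 = 0" and "m \<le> n"
  shows "(a oo c) $ m = (\<Sum>j=0..n. a $ j * (c ^ j) $ m)"
  unfolding fps_compose_nth
  using assms by (intro sum.mono_neutral_left) (auto simp: startsby_zero_power_prefix)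

lemma fps_mult_compose_nth:
  fixes g a c :: "'a::comm_ring_1 fps"
  assumes "c $ 0 = 0"
  shows "(g * (a oo c)) $ n = (\<Sum>j=0..n. a $ j * (g * c ^ j) $ n)"
proof -
  have "(g * (a oo c)) $ n = (\<Sum>i=0..n. g $ i * (\<Sum>j=0..n. a $ j * (c ^ j) $ (n - i)))"
    unfolding fps_mult_nth by (rule sum.cong) (simp_all add: fps_compose_nth_upto[OF assms(1), where n = n])
  also have "\<dots> = (\<Sum>j=0..n. a $ j * (\<Sum>i=0..n. g $ i * (c ^ j) $ (n - i)))"
    unfolding sum_distrib_left by (subst sum.swap) (simp add: mult_ac)
  finally show ?thesis by (simp add: fps_mult_nth)
qed

lemma riordan_entry_eq:
  assumes "f $ 0 = 0"
  shows "riordan_entry g f n k = (g * f ^ k) $ n"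
  using assms by (auto simp: riordan_entry_def fps_mult_nth startsby_zero_power_prefix intro!: sum.neutral)

lemma is_typeII_B_seq_iff_mult_compose:
  fixes g f :: "'a::field fps"
  assumes "f $ 0 = 0"
  shows "is_typeII_B_seq g f b \<longleftrightarrow> (\<forall>n. g $ Suc n = (g * (Abs_fps b oo (fps_X * f))) $ n)"
proof -
  have "(g * (fps_X * f) ^ j) $ n = riordan_entry g f (n - j) j" if "j \<le> n" for j n
    using that assms
    by (simp add: riordan_entry_eq power_mult_distrib mult.left_commute[of g] fps_X_power_mult_nth)
  then show ?thesis
    using assms by (simp add: is_typeII_B_seq_def fps_mult_compose_nth riordan_entry_def atLeast0AtMost)
qed

lemma fps_eq_1_plus_X_mult_iff:
  fixes g a :: "'a::comm_ring_1 fps"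
  assumes "g $ 0 = 1"
  shows "g = 1 + fps_X * a \<longleftrightarrow> (\<forall>n. g $ Suc n = a $ n)"
proof
  assume "\<forall>n. g $ Suc n = a $ n"
  show "g = 1 + fps_X * a"
  proof (rule fps_ext)
    fix n
    show "g $ n = (1 + fps_X * a) $ n"
      using assms \<open>\<forall>n. g $ Suc n = a $ n\<close> by (cases n) simp_all
  qed
qed simp

lemma fps_inv_nth_0 [simp]: "fps_inv f $ 0 = 0"
  by (simp add: fps_inv_def)

lemma fps_inv_nth_1 [simp]: "fps_inv f $ 1 = inverse (f $ 1)"
  by (simp add: fps_inv_def field_simps)

lemma fps_compose_X_mult_eq_compose_fps_inv:
  fixes a f :: "'a::field fps"
  assumes f0: "f $ 0 = 0" and f1: "f $ 1 \<noteq> 0"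
  shows "a oo (fps_X * f) = (a oo (fps_X * fps_inv f)) oo f"
proof -
  have "(fps_X * fps_inv f) oo f = fps_X * f"
    by (simp add: fps_compose_mult_distrib[OF f0] fps_inv[OF f0 f1] f0 mult.commute)
  then show ?thesis
    by (simp add: fps_compose_assoc[OF f0, symmetric])
qed

lemma is_Z_gf_imp_eq_1_plus_X_mult:
  assumes "is_Z_gf g f Z"
  shows "g = 1 + fps_X * g * (Z oo f)"
proof -
  have "g * (1 - fps_X * (Z oo f)) = 1"
    using assms by (simp add: is_Z_gf_def inverse_mult_eq_1)
  then show ?thesis by (simp add: algebra_simps)
qed

lemma is_typeII_B_seq_iff_compose:
  fixes g f Z :: "'a::field fps"
  assumes r: "riordan g f" and Z: "is_Z_gf g f Z"
  shows "is_typeII_B_seq g f b \<longleftrightarrow> Z = Abs_fps b oo (fps_X * fps_inv f)"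
proof -
  have f0: "f $ 0 = 0" and f1: "f $ 1 \<noteq> 0" and g0: "g $ 0 = 1"
    using r by (auto simp: riordan_def)
  let ?B = "Abs_fps b oo (fps_X * fps_inv f)"
  have Xg: "fps_X * g \<noteq> 0"
    using g0 by (metis fps_X_neq_zero fps_nonzero_nth mult_eq_0_iff one_neq_zero)
  have "is_typeII_B_seq g f b \<longleftrightarrow> g = 1 + fps_X * g * (?B oo f)"
    by (simp add: is_typeII_B_seq_iff_mult_compose[OF f0] fps_eq_1_plus_X_mult_iff[OF g0]
        fps_compose_X_mult_eq_compose_fps_inv[OF f0 f1] mult.assoc)
  also have "\<dots> \<longleftrightarrow> fps_X * g * (?B oo f) = fps_X * g * (Z oo f)"
    using is_Z_gf_imp_eq_1_plus_X_mult[OF Z] by (metis add_left_cancel)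
  also have "\<dots> \<longleftrightarrow> ?B = Z"
    using Xg by (simp add: fps_compose_inj_right[OF f0 f1])
  finally show ?thesis by auto
qed

lemma power_fps_X_mult_nth:
  fixes p :: "'a::comm_ring_1 fps"
  shows "((fps_X * p) ^ k) $ n = (if n < k then 0 else (p ^ k) $ (n - k))"
  by (simp add: power_mult_distrib fps_X_power_mult_nth)

lemma power_fps_X_mult_nth_less:
  fixes p :: "'a::comm_ring_1 fps"
  assumes "p $ 0 = 0" and "n < 2 * k"
  shows "((fps_X * p) ^ k) $ n = 0"
  using assms by (simp add: power_fps_X_mult_nth startsby_zero_power_prefix)

lemma power_fps_X_mult_nth_double:
  fixes p :: "'a::comm_ring_1 fps"
  assumes "p $ 0 = 0"
  shows "((fps_X * p) ^ k) $ (2 * k) = (p $ 1) ^ k"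
  using assms by (simp add: power_fps_X_mult_nth startsby_zero_power_nth_same)

lemma fps_compose_X_mult_nth:
  fixes p :: "'a::comm_ring_1 fps"
  assumes "p $ 0 = 0" and "0 < n"
  shows "(Abs_fps b oo (fps_X * p)) $ n = (\<Sum>k=1..n div 2. b k * ((fps_X * p) ^ k) $ n)"
  unfolding fps_compose_nth fps_nth_Abs_fps
proof (rule sum.mono_neutral_right)
  show "\<forall>k\<in>{0..n} - {1..n div 2}. b k * ((fps_X * p) ^ k) $ n = 0"
    using assms by (auto simp: power_fps_X_mult_nth_less Suc_le_eq)
qed auto

lemma fps_compose_X_mult_nth_odd:
  fixes p :: "'a::comm_ring_1 fps"
  assumes "p $ 0 = 0"
  shows "(Abs_fps b oo (fps_X * p)) $ (2 * l + 1)
       = (\<Sum>is\<in>compositions_le (2 * l + 1) l. b (length is) * (\<Prod>i\<leftarrow>is. p $ (i - 1)))"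
  by (simp only: fps_compose_X_mult_nth[OF assms] sum_compositions_le_eq_power_nth) simp

lemma fps_compose_X_mult_nth_even:
  fixes p :: "'a::comm_ring_1 fps"
  assumes "p $ 0 = 0" and "1 \<le> l"
  shows "(Abs_fps b oo (fps_X * p)) $ (2 * l)
       = (\<Sum>is\<in>compositions_le (2 * l) (l - 1). b (length is) * (\<Prod>i\<leftarrow>is. p $ (i - 1)))
         + b l * (p $ 1) ^ l"
proof -
  have "{1..l} = insert l {1..l - 1}"
    using assms(2) by auto
  then show ?thesis
    using assms
    by (simp only: fps_compose_X_mult_nth[OF assms(1)] sum_compositions_le_eq_power_nth)
       (simp add: power_fps_X_mult_nth_double)
qed

lemma nat_all_parity_iff:
  fixes P :: "nat \<Rightarrow> bool"
  shows "(\<forall>n. P n) \<longleftrightarrow> P 0 \<and> P 1 \<and> (\<forall>l\<ge>1. P (2 * l)) \<and> (\<forall>l\<ge>1. P (2 * l + 1))"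
proof (intro iffI allI)
  fix n
  assume P: "P 0 \<and> P 1 \<and> (\<forall>l\<ge>1. P (2 * l)) \<and> (\<forall>l\<ge>1. P (2 * l + 1))"
  obtain l :: nat where "n = 2 * l \<or> n = 2 * l + 1"
    by (metis oddE evenE)
  with P show "P n"
    by (cases "l = 0") auto
qed simp

theorem theorem3p4:
  fixes g f Z :: "'a::real_normed_field fps" and b :: "nat \<Rightarrow> 'a"
  assumes "riordan g f"
    and "is_Z_gf g f Z"
  shows "is_typeII_B_seq g f b \<longleftrightarrow>
     b 0 = fps_nth Z 0 \<and> fps_nth Z 1 = 0 \<and>
     (\<forall>l\<ge>1. b l = (fps_nth f 1) ^ l *
        (fps_nth Z (2 * l) - (\<Sum>is\<in>compositions_le (2 * l) (l - 1).
            b (length is) * (\<Prod>i\<leftarrow>is. fps_nth (fps_inv f) (i - 1))))) \<and>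
     (\<forall>l\<ge>1. fps_nth Z (2 * l + 1) = (\<Sum>is\<in>compositions_le (2 * l + 1) l.
            b (length is) * (\<Prod>i\<leftarrow>is. fps_nth (fps_inv f) (i - 1))))"
proof -
  have f1: "f $ 1 \<noteq> 0"
    using assms(1) by (simp add: riordan_def)
  define S where "S n m = (\<Sum>is\<in>compositions_le n m. b (length is) * (\<Prod>i\<leftarrow>is. fps_inv f $ (i - 1)))"
    for n m
  let ?B = "Abs_fps b oo (fps_X * fps_inv f)"
  have B_nth: "?B $ 0 = b 0" "?B $ 1 = 0"
    by (simp_all add: fps_compose_X_mult_nth)
  have B_nth_odd: "?B $ (2 * l + 1) = S (2 * l + 1) l" for l
    unfolding S_def by (rule fps_compose_X_mult_nth_odd) simp
  have Z_nth_even_iff: "Z $ (2 * l) = ?B $ (2 * l)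
      \<longleftrightarrow> b l = (f $ 1) ^ l * (Z $ (2 * l) - S (2 * l) (l - 1))" if "1 \<le> l" for l
  proof -
    have "?B $ (2 * l) = S (2 * l) (l - 1) + b l * inverse (f $ 1) ^ l"
      unfolding S_def fps_compose_X_mult_nth_even[OF fps_inv_nth_0 that] fps_inv_nth_1 ..
    then show ?thesis
      using f1 by (auto simp: field_simps power_inverse)
  qed
  have "is_typeII_B_seq g f b \<longleftrightarrow> (\<forall>n. Z $ n = ?B $ n)"
    by (simp add: is_typeII_B_seq_iff_compose[OF assms] fps_eq_iff)
  also have "\<dots> \<longleftrightarrow> b 0 = Z $ 0 \<and> Z $ 1 = 0 \<and>
      (\<forall>l\<ge>1. b l = (f $ 1) ^ l * (Z $ (2 * l) - S (2 * l) (l - 1))) \<and>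
      (\<forall>l\<ge>1. Z $ (2 * l + 1) = S (2 * l + 1) l)"
    unfolding nat_all_parity_iff[of "\<lambda>n. Z $ n = ?B $ n"] B_nth B_nth_odd by (auto simp: Z_nth_even_iff)
  finally show ?thesis
    by (simp add: S_def)
qed

end
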